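(* For each $w\in\{1,2,3,4,5\}$, the function $z\mapsto g_w(e^z)$ is concave on the interval $\big[\ln(1-(1/2)^w),0\big]$.
   Context: $h(t)=(1-t)\left[\psi-\left(\frac{t}{1-t}\right)^{\chi}\right]$ with $\psi=13/10$, $\chi=1/2$, and for a positive integer $w$, $g_w(y)=\frac{1-y}{y}\,h\big((1-y)^{1/w}\big)$. *)

theory Defs
  imports "HOL-Analysis.Analysis"
begin

definition psi :: real where "psi = 13/10"
definition chi :: real where "chi = 1/2"

definition h :: "real \<Rightarrow> real" where
  "h t = (1 - t) * (psi - (t / (1 - t)) powr chi)"

definition g :: "nat \<Rightarrow> real \<Rightarrow> real" where
  "g w y = (1 - y) / y * h ((1 - y) powr (1 / real w))"

end

theory Submission
  imports Defs
begin

(*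
  Put t = (1 - e^z)^(1/w), so that e^z = 1 - t^w and g_w(e^z) = (e^(-z) - 1) h(t). The chain rule
  gives d/dz g_w(e^z) = -(h(t)/(1 - t^w) + t h'(t)/w), and in the variable r = sqrt(t/(1 - t)) the
  bracket becomes (psi - r)/(1 + t + ... + t^(w-1)) + kappa(r)/w with
  kappa(r) = (r^3 - 2 psi r^2 - r)/(2 (1 + r^2)), which is decreasing on [0, 1].
  For t <= 1/2 we have r <= 1 < psi, so the bracket decreases in t; since t decreases in z,
  the derivative decreases in z, giving concavity on [ln(1 - 2^-w), 0). Continuity at z = 0
  closes the interval. Nothing beyond w >= 1 is used.
*)

lemma concave_on_Icc_if_concave_on_Ico:
  fixes f :: "real \<Rightarrow> real"
  assumes concave: "concave_on {a..<b} f" and cont: "continuous_on {a..b} f"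
  shows "concave_on {a..b} f"
proof (rule concave_on_linorderI)
  fix t x y :: real
  assume t: "0 < t" "t < 1" and x: "x \<in> {a..b}" and y: "y \<in> {a..b}" and "x < y"
  define m where "m y' = (1 - t) * x + t * y'" for y'
  have m_mem: "m y' \<in> {a..b}" if "y' \<in> {x..b}" for y'
  proof -
    have "m y' = x + t * (y' - x)"
      by (simp add: m_def algebra_simps)
    moreover have "0 \<le> t * (y' - x)" "t * (y' - x) \<le> y' - x"
      using that t by (simp_all add: mult_left_le_one_le)
    ultimately show ?thesis
      using that x by auto
  qed
  show "(1 - t) * f x + t * f y \<le> f ((1 - t) *\<^sub>R x + t *\<^sub>R y)"
  proof (cases "y < b")
    case True
    then show ?thesis
      using concave_onD[OF concave, of t x y] t x y \<open>x < y\<close> by auto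
  next
    case False
    with y \<open>x < y\<close> have "y = b" "x < b" by auto
    define gap where "gap y' = f (m y') - ((1 - t) * f x + t * f y')" for y'
    have "continuous_on {x..b} m"
      unfolding m_def by (intro continuous_intros)
    then have "continuous_on {x..b} (\<lambda>y'. f (m y'))"
      by (rule continuous_on_compose2[OF cont]) (use m_mem in auto)
    moreover have "continuous_on {x..b} (\<lambda>y'. (1 - t) * f x + t * f y')"
      using x by (intro continuous_on_add continuous_on_const continuous_on_mult_left
          continuous_on_subset[OF cont, of "{x..b}"]) auto
    ultimately have "continuous_on {x..b} gap"
      unfolding gap_def by (rule continuous_on_diff)
    moreover have "0 \<le> gap y'" if "y' \<in> {x..<b}" for y'
    proof -
      have "(1 - t) * f x + t * f y' \<le> f ((1 - t) *\<^sub>R x + t *\<^sub>R y')"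
        by (rule concave_onD[OF concave]) (use t x that in auto)
      then show ?thesis
        by (simp add: gap_def m_def)
    qed
    moreover have "closure {x..<b} = {x..b}"
      using \<open>x < b\<close> by simp
    ultimately have "0 \<le> gap b"
      by (metis atLeastAtMost_iff continuous_ge_on_closure order_refl \<open>x < b\<close> less_imp_le)
    then show ?thesis
      by (simp add: gap_def m_def \<open>y = b\<close>)
  qed
qed (rule convex_real_interval)

lemma h_eq_sqrt_ratio:
  assumes "0 \<le> t" "t < 1"
  shows "h t = (1 - t) * (psi - sqrt (t / (1 - t)))"
  using assms by (simp add: h_def chi_def powr_half_sqrt)

lemma h_eq_sqrt_prod:
  assumes "0 \<le> t" "t < 1"
  shows "h t = psi * (1 - t) - sqrt (t * (1 - t))"
proof -
  have "(1 - t) * sqrt (t / (1 - t)) = sqrt ((1 - t)\<^sup>2) * sqrt (t / (1 - t))"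
    using assms by simp
  also have "\<dots> = sqrt ((1 - t)\<^sup>2 * (t / (1 - t)))"
    by (rule real_sqrt_mult[symmetric])
  also have "(1 - t)\<^sup>2 * (t / (1 - t)) = t * (1 - t)"
    using assms by (simp add: power2_eq_square)
  finally show ?thesis
    using assms by (simp add: h_eq_sqrt_ratio algebra_simps)
qed

definition dh :: "real \<Rightarrow> real" where
  "dh t = - psi - (1 - 2 * t) / (2 * sqrt (t * (1 - t)))"

lemma h_has_real_derivative:
  assumes "0 < t" "t < 1"
  shows "(h has_real_derivative dh t) (at t)"
proof -
  have pos: "0 < t * (1 - t)" using assms by simp
  have "((\<lambda>t. psi * (1 - t) - sqrt (t * (1 - t))) has_real_derivative dh t) (at t)"
    unfolding dh_def using pos
    by (auto intro!: derivative_eq_intros simp: field_simps)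
  then show ?thesis
    by (rule has_field_derivative_transform_within_open[where S = "{0<..<1}"])
       (use assms in \<open>auto simp: h_eq_sqrt_prod\<close>)
qed

definition kappa :: "real \<Rightarrow> real" where
  "kappa r = (r ^ 3 - 2 * psi * r\<^sup>2 - r) / (2 * (1 + r\<^sup>2))"

lemma mult_dh_eq_kappa:
  assumes "0 < t" "t < 1"
  shows "t * dh t = kappa (sqrt (t / (1 - t)))"
proof -
  define r where "r = sqrt (t / (1 - t))"
  have "r\<^sup>2 = t / (1 - t)" "0 < r"
    using assms by (simp_all add: r_def)
  moreover have pos: "0 < 1 + r\<^sup>2"
    by (simp add: add_pos_nonneg)
  ultimately have t: "t = r\<^sup>2 / (1 + r\<^sup>2)"
    using assms by (simp add: field_simps)
  have "t * (1 - t) = (r / (1 + r\<^sup>2))\<^sup>2"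
    using pos unfolding t by (simp add: divide_simps) (simp add: algebra_simps power2_eq_square)
  then have "sqrt (t * (1 - t)) = sqrt ((r / (1 + r\<^sup>2))\<^sup>2)"
    by simp
  also have "\<dots> = r / (1 + r\<^sup>2)"
    using \<open>0 < r\<close> by (simp add: add_pos_nonneg)
  finally have "sqrt (t * (1 - t)) = r / (1 + r\<^sup>2)" .
  then have "dh t = - psi - (1 - 2 * t) * (1 + r\<^sup>2) / (2 * r)"
    by (simp add: dh_def)
  moreover have "r\<^sup>2 / (1 + r\<^sup>2) * (- psi - (1 - 2 * (r\<^sup>2 / (1 + r\<^sup>2))) * (1 + r\<^sup>2) / (2 * r))
      = kappa r"
    using pos \<open>0 < r\<close> unfolding kappa_def
    by (simp add: divide_simps) (simp add: algebra_simps power2_eq_square power3_eq_cube)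
  ultimately have "t * dh t = kappa r"
    by (simp only: t[symmetric])
  then show ?thesis
    by (simp add: r_def)
qed

lemma kappa_has_real_derivative:
  "(kappa has_real_derivative (r ^ 4 + 4 * r\<^sup>2 - 4 * psi * r - 1) / (2 * (1 + r\<^sup>2)\<^sup>2)) (at r)"
proof -
  have "0 < 1 + r\<^sup>2"
    by (simp add: add_pos_nonneg)
  then show ?thesis
    unfolding kappa_def
    by (auto intro!: derivative_eq_intros simp: divide_simps) (simp add: algebra_simps power2_eq_square power3_eq_cube power4_eq_xxxx)
qed

lemma kappa_antimono:
  assumes "0 \<le> r1" "r1 \<le> r2" "r2 \<le> 1"
  shows "kappa r2 \<le> kappa r1"
proof (rule deriv_nonpos_imp_antimono[OF kappa_has_real_derivative _ assms(2)])
  fix r assume "r \<in> {r1..r2}"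
  then have "0 \<le> r" "r \<le> 1" using assms by auto
  then have "r ^ 4 \<le> r\<^sup>2" "r\<^sup>2 \<le> r"
    using power_decreasing[of 2 4 r] by (auto simp: power2_eq_square mult_left_le)
  with \<open>0 \<le> r\<close> have "r ^ 4 + 4 * r\<^sup>2 - 4 * psi * r - 1 \<le> 0"
    unfolding psi_def by linarith
  then show "(r ^ 4 + 4 * r\<^sup>2 - 4 * psi * r - 1) / (2 * (1 + r\<^sup>2)\<^sup>2) \<le> 0"
    using add_pos_nonneg[of 1 "r\<^sup>2"] by (intro divide_nonpos_pos) auto
qed

definition slope :: "nat \<Rightarrow> real \<Rightarrow> real" where
  "slope w t = h t / (1 - t ^ w) + t * dh t / real w"

lemma slope_eq:
  assumes "0 < t" "t < 1"
  shows "slope w t = (psi - sqrt (t / (1 - t))) / (\<Sum>i<w. t ^ i) + kappa (sqrt (t / (1 - t))) / real w"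
  using assms
  by (simp add: slope_def h_eq_sqrt_ratio mult_dh_eq_kappa one_diff_power_eq[of t w])

lemma slope_antimono:
  assumes "w \<ge> 1" "0 < t1" "t1 \<le> t2" "t2 \<le> 1/2"
  shows "slope w t2 \<le> slope w t1"
proof -
  define r where "r t = sqrt (t / (1 - t))" for t :: real
  have r_mono: "r t1 \<le> r t2" and r_bound: "0 \<le> r t1" "r t2 \<le> 1"
    using assms by (auto simp: r_def intro!: frac_le)
  have psi_ge: "1 \<le> psi"
    by (simp add: psi_def)
  have sum_pos: "0 < (\<Sum>i<w. t1 ^ i)"
    using assms by (intro sum_pos) (auto simp: lessThan_empty_iff)
  have sum_mono: "(\<Sum>i<w. t1 ^ i) \<le> (\<Sum>i<w. t2 ^ i)"
    using assms by (intro sum_mono power_mono) auto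
  have "(psi - r t2) / (\<Sum>i<w. t2 ^ i) \<le> (psi - r t1) / (\<Sum>i<w. t1 ^ i)"
    using r_mono r_bound psi_ge sum_pos sum_mono by (intro frac_le) auto
  moreover have "kappa (r t2) / real w \<le> kappa (r t1) / real w"
    using kappa_antimono[OF r_bound(1) r_mono r_bound(2)] by (simp add: divide_right_mono)
  ultimately show ?thesis
    using assms by (simp add: slope_eq r_def)
qed

definition h_arg :: "nat \<Rightarrow> real \<Rightarrow> real" where
  "h_arg w z = (1 - exp z) powr (1 / real w)"

lemma g_exp_eq: "g w (exp z) = (exp (- z) - 1) * h (h_arg w z)"
  by (simp add: g_def h_arg_def exp_minus field_simps)

lemma h_arg_power:
  assumes "w \<ge> 1" "z < 0"
  shows "h_arg w z ^ w = 1 - exp z"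
  using assms by (simp add: h_arg_def powr_power)

lemma h_arg_bounds:
  assumes "w \<ge> 1" "z < 0"
  shows "0 < h_arg w z" "h_arg w z < 1"
proof -
  show "0 < h_arg w z"
    using assms by (simp add: h_arg_def)
  have "h_arg w z ^ w < 1"
    using assms by (simp add: h_arg_power)
  then show "h_arg w z < 1"
    using power_less_imp_less_base[of "h_arg w z" w 1] by simp
qed

lemma h_arg_antimono:
  assumes "x \<le> y" "y \<le> 0"
  shows "h_arg w y \<le> h_arg w x"
  unfolding h_arg_def using assms by (intro powr_mono2) auto

lemma h_arg_le_half:
  assumes "w \<ge> 1" "ln (1 - (1/2) ^ w) \<le> z" "z \<le> 0"
  shows "h_arg w z \<le> 1/2"
proof -
  have "0 < 1 - (1/2::real) ^ w"
    using assms(1) by (simp add: power_less_one_iff)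
  with assms(2) have "1 - exp z \<le> (1/2) ^ w"
    by (metis diff_le_eq add.commute exp_le_cancel_iff exp_ln)
  then have "h_arg w z \<le> ((1/2) ^ w) powr (1 / real w)"
    unfolding h_arg_def using assms(3) by (intro powr_mono2) auto
  also have "\<dots> = 1/2"
    using assms(1) by (simp add: powr_realpow[symmetric] powr_powr)
  finally show ?thesis .
qed

lemma h_arg_has_real_derivative:
  assumes "z < 0"
  shows "(h_arg w has_real_derivative - h_arg w z * exp z / (real w * (1 - exp z))) (at z)"
  unfolding h_arg_def using assms
  by (auto intro!: derivative_eq_intros simp: powr_diff field_simps)

lemma g_exp_has_real_derivative:
  assumes "w \<ge> 1" "z < 0"
  shows "((\<lambda>z. g w (exp z)) has_real_derivative - slope w (h_arg w z)) (at z)"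
proof -
  define t where "t = h_arg w z"
  have t: "0 < t" "t < 1" "1 - t ^ w = exp z"
    using h_arg_bounds[OF assms] h_arg_power[OF assms] by (simp_all add: t_def)
  have "((\<lambda>z. h (h_arg w z)) has_real_derivative dh t * (- t * exp z / (real w * (1 - exp z)))) (at z)"
    using DERIV_chain2[OF h_has_real_derivative[OF t(1,2), unfolded t_def] h_arg_has_real_derivative[OF assms(2)]]
    by (simp add: t_def)
  then have "((\<lambda>z. (exp (- z) - 1) * h (h_arg w z)) has_real_derivative
      - exp (- z) * h t + (exp (- z) - 1) * (dh t * (- t * exp z / (real w * (1 - exp z))))) (at z)"
    by (auto intro!: derivative_eq_intros simp: t_def)
  moreover have "- exp (- z) * h t + (exp (- z) - 1) * (dh t * (- t * exp z / (real w * (1 - exp z))))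
      = - slope w t"
    unfolding slope_def t(3) using assms t(2) by (simp add: exp_minus field_simps)
  ultimately show ?thesis
    by (simp add: g_exp_eq t_def)
qed

lemma concave_on_g_exp_Ico:
  assumes "w \<ge> 1"
  shows "concave_on {ln (1 - (1/2) ^ w)..<0} (\<lambda>z. g w (exp z))"
  unfolding concave_on_def
proof (rule convex_on_realI[where f' = "\<lambda>z. slope w (h_arg w z)"])
  fix x y :: real
  assume x: "x \<in> {ln (1 - (1/2) ^ w)..<0}" and y: "y \<in> {ln (1 - (1/2) ^ w)..<0}"
  show "((\<lambda>z. - g w (exp z)) has_real_derivative slope w (h_arg w x)) (at x)"
    using DERIV_minus[OF g_exp_has_real_derivative[OF assms, of x]] x by simp
  assume "x \<le> y"
  then show "slope w (h_arg w x) \<le> slope w (h_arg w y)"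
    using x y assms
    by (intro slope_antimono h_arg_bounds h_arg_antimono h_arg_le_half) auto
qed simp

lemma continuous_on_g_exp:
  assumes "w \<ge> 1"
  shows "continuous_on {..0} (\<lambda>z. g w (exp z))"
proof -
  have arg: "0 \<le> h_arg w z" "h_arg w z < 1" if "z \<le> 0" for z
    using that assms h_arg_bounds[of w z] by (cases "z = 0"; force simp: h_arg_def)+
  have "continuous_on {..0} (h_arg w)"
    unfolding h_arg_def using assms by (intro continuous_intros continuous_on_powr') auto
  then have "continuous_on {..0} (\<lambda>z. (exp (- z) - 1) * h (h_arg w z))"
    unfolding h_def chi_def
    by (intro continuous_on_powr' continuous_intros) (auto simp: divide_simps dest: arg)
  then show ?thesis
    by (simp add: g_exp_eq)
qed

lemma concave_on_g_exp:
  assumes "w \<ge> 1"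
  shows "concave_on {ln (1 - (1/2) ^ w)..0} (\<lambda>z. g w (exp z))"
  by (rule concave_on_Icc_if_concave_on_Ico[OF concave_on_g_exp_Ico[OF assms]
        continuous_on_subset[OF continuous_on_g_exp[OF assms]]]) auto

theorem lemma39:
  fixes w :: nat
  assumes "w \<in> {1,2,3,4,5}"
  shows "concave_on {ln (1 - (1/2) ^ w) .. 0} (\<lambda>z. g w (exp z))"
  using assms by (intro concave_on_g_exp) auto

end
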